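(* There exists a $\mathbb{Q}$-linear map $\phi:\mathbb{Y}\to\mathbb{Q}[t]$ such that $\phi(Y_P)=t^{\mathrm{sink}(P)}$ for every signed poset $P$, where $\mathrm{sink}(P)$ is the number of sinks of $P$.
   Context: A signed graph $\Sigma$ is a finite graph (loops and multiple edges allowed) with $\mathrm{sgn}:E(\Sigma)\to\{+,-\}$; write $e:uv$ if $e$ has endpoints $u,v$. A coloring $\kappa:V(\Sigma)\to\mathbb{Z}$ is proper if $\kappa(u)\ne\mathrm{sgn}(e)\kappa(v)$ for every edge $e:uv$. An orientation assigns to each half-edge (incidence of an edge with an endpoint; a loop has two) an arrow toward or away from the vertex, such that on a positive edge exactly one of the two arrows points toward its vertex and on a negative edge both point toward or both point away. A cycle is a closed walk in which, considering only the edges of the walk, every vertex of the walk has at least one arrow pointing into it and one pointing out of it; an orientation is acyclic if it has no cycle; a sink is a vertex all of whose incident arrows point toward it (an isolated vertex is a sink). A signed poset is an acyclic orientation $P$ of a signed graph. A proper coloring $\kappa$ preserves $P$ if for every edge $e$ and each endpoint $v$ of $e$, with $u$ the other endpoint ($u=v$ for a loop), the arrow of $P$ at the incidence of $e$ with $v$ points toward $v$ iff $\kappa(v)>\mathrm{sgn}(e)\kappa(u)$. Let $Y_P=\sum_{\kappa}\prod_{v}x_{\kappa(v)}$ over proper colorings $\kappa$ preserving $P$ (variables $x_i$, $i\in\mathbb{Z}$), and let $\mathbb{Y}$ be the $\mathbb{Q}$-span of all $Y_P$, over all signed posets $P$ of all signed graphs. *)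

theory Defs
  imports "HOL-Library.Multiset" "HOL-Library.FuncSet" "HOL-Computational_Algebra.Polynomial"
begin

text \<open>Each edge e has an ordered pair of endpoints ends e = (u,v) (a loop has u = v),
  so it has two half-edges: (e, True) at u and (e, False) at v.
  sgn e = True means the edge is positive.\<close>

record sgraph =
  verts :: "nat set"
  edges :: "nat set"
  ends  :: "nat \<Rightarrow> nat \<times> nat"
  sgn   :: "nat \<Rightarrow> bool"

definition signed_graph :: "sgraph \<Rightarrow> bool" where
  "signed_graph G \<longleftrightarrow> finite (verts G) \<and> finite (edges G) \<and>
     (\<forall>e\<in>edges G. fst (ends G e) \<in> verts G \<and> snd (ends G e) \<in> verts G)"

definition endpt :: "sgraph \<Rightarrow> nat \<Rightarrow> bool \<Rightarrow> nat" where
  "endpt G e b = (if b then fst (ends G e) else snd (ends G e))"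

definition sgnval :: "sgraph \<Rightarrow> nat \<Rightarrow> int" where
  "sgnval G e = (if sgn G e then 1 else -1)"

text \<open>An orientation: arr e b = True iff the arrow at half-edge (e,b) points toward its vertex.\<close>
definition orientation :: "sgraph \<Rightarrow> (nat \<Rightarrow> bool \<Rightarrow> bool) \<Rightarrow> bool" where
  "orientation G arr \<longleftrightarrow> (\<forall>e\<in>edges G. sgn G e \<longleftrightarrow> arr e True \<noteq> arr e False)"

definition is_cycle :: "sgraph \<Rightarrow> (nat \<Rightarrow> bool \<Rightarrow> bool) \<Rightarrow> nat list \<Rightarrow> nat list \<Rightarrow> bool" where
  "is_cycle G arr vs es \<longleftrightarrow>
     length es \<ge> 1 \<and> length vs = length es + 1 \<and> vs ! 0 = vs ! length es \<and>
     (\<forall>i < length es. es ! i \<in> edges G \<and>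
        (ends G (es ! i) = (vs ! i, vs ! Suc i) \<or> ends G (es ! i) = (vs ! Suc i, vs ! i))) \<and>
     (\<forall>w \<in> set vs.
        (\<exists>e\<in>set es. \<exists>b. endpt G e b = w \<and> arr e b) \<and>
        (\<exists>e\<in>set es. \<exists>b. endpt G e b = w \<and> \<not> arr e b))"

definition acyclic_orientation :: "sgraph \<Rightarrow> (nat \<Rightarrow> bool \<Rightarrow> bool) \<Rightarrow> bool" where
  "acyclic_orientation G arr \<longleftrightarrow> orientation G arr \<and> \<not> (\<exists>vs es. is_cycle G arr vs es)"

definition signed_poset :: "sgraph \<Rightarrow> (nat \<Rightarrow> bool \<Rightarrow> bool) \<Rightarrow> bool" where
  "signed_poset G arr \<longleftrightarrow> signed_graph G \<and> acyclic_orientation G arr"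

definition is_sink :: "sgraph \<Rightarrow> (nat \<Rightarrow> bool \<Rightarrow> bool) \<Rightarrow> nat \<Rightarrow> bool" where
  "is_sink G arr v \<longleftrightarrow> v \<in> verts G \<and> (\<forall>e\<in>edges G. \<forall>b. endpt G e b = v \<longrightarrow> arr e b)"

definition sinks :: "sgraph \<Rightarrow> (nat \<Rightarrow> bool \<Rightarrow> bool) \<Rightarrow> nat" where
  "sinks G arr = card {v. is_sink G arr v}"

definition proper :: "sgraph \<Rightarrow> (nat \<Rightarrow> int) \<Rightarrow> bool" where
  "proper G \<kappa> \<longleftrightarrow> (\<forall>e\<in>edges G. \<kappa> (fst (ends G e)) \<noteq> sgnval G e * \<kappa> (snd (ends G e)))"

definition preserves :: "sgraph \<Rightarrow> (nat \<Rightarrow> bool \<Rightarrow> bool) \<Rightarrow> (nat \<Rightarrow> int) \<Rightarrow> bool" where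
  "preserves G arr \<kappa> \<longleftrightarrow>
     (\<forall>e\<in>edges G. \<forall>b. arr e b \<longleftrightarrow> \<kappa> (endpt G e b) > sgnval G e * \<kappa> (endpt G e (\<not> b)))"

text \<open>Y_P as a formal power series in the variables x_i (i \<in> int): the coefficient of the
  monomial \<Prod>_{i} x_i^{m(i)} (encoded by the multiset m of colours) is the number of
  proper colourings preserving P whose colour multiset is m.\<close>
definition Ycoef :: "sgraph \<Rightarrow> (nat \<Rightarrow> bool \<Rightarrow> bool) \<Rightarrow> int multiset \<Rightarrow> rat" where
  "Ycoef G arr m = of_nat (card {\<kappa> \<in> verts G \<rightarrow>\<^sub>E (UNIV :: int set).
       proper G \<kappa> \<and> preserves G arr \<kappa> \<and> image_mset \<kappa> (mset_set (verts G)) = m})"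

definition Yspan :: "(int multiset \<Rightarrow> rat) set" where
  "Yspan = {(\<lambda>m. \<Sum>p\<in>S. c p * Ycoef (fst p) (snd p) m) | S c.
              finite S \<and> (\<forall>p\<in>S. signed_poset (fst p) (snd p))}"

end

(*
  Call a colouring gapless if the absolute values of its nonzero colours fill an interval
  {1..L}; L is its level.  In a gapless colouring preserving P the vertices coloured L are
  sinks and those coloured -L are sources, and deleting them leaves a gapless colouring of
  level L - 1.  Conversely, any nonempty disjoint choice of sinks A and sources B can be put
  on top of a gapless colouring of the rest.  Inclusion-exclusion along this recursion gives
  that the gapless colourings, counted with sign (-1)^L, sum to (-1)^|V|: acyclicity enters
  only through the fact that the sinks and the sources differ as soon as there is an edge.
  Weighting each gapless colouring by a function of its colour multiset alone, chosen so that
  the colourings with top layer A and no bottom layer contribute (t - 1)^|A| in total, the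
  weights of all gapless colourings of P add up to t^sink(P).  As each Y_P has only finitely
  many gapless monomials, summing the weights against the coefficients of gapless monomials
  is a finite sum, hence linear on the span.
*)

theory Submission
  imports Defs
begin

section \<open>Alternating sums over subsets\<close>

lemma sum_power_card_Pow:
  fixes x :: "'a::comm_semiring_1"
  assumes "finite Z"
  shows "(\<Sum>B\<in>Pow Z. x ^ card B) = (x + 1) ^ card Z"
  using prod_add[OF assms, of "\<lambda>_. x" "\<lambda>_. 1"] by simp

lemma sum_neg_one_power_card_Pow:
  assumes "finite Z"
  shows "(\<Sum>B\<in>Pow Z. (-1::'a::comm_ring_1) ^ card B) = (if Z = {} then 1 else 0)"
  using sum_power_card_Pow[OF assms, of "-1::'a"] assms by (auto simp: card_eq_0_iff power_0_left)

lemma sum_neg_one_power_disjoint_pairs: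
  assumes "finite X" "finite Y"
  shows "(\<Sum>(A, B)\<in>{(A, B). A \<subseteq> X \<and> B \<subseteq> Y \<and> A \<inter> B = {}}. (-1::'a::comm_ring_1) ^ (card A + card B))
       = (if X = Y then (-1) ^ card X else 0)"
proof -
  have pairs: "{(A, B). A \<subseteq> X \<and> B \<subseteq> Y \<and> A \<inter> B = {}} = Sigma (Pow X) (\<lambda>A. Pow (Y - A))"
    by auto
  have "(\<Sum>(A, B)\<in>{(A, B). A \<subseteq> X \<and> B \<subseteq> Y \<and> A \<inter> B = {}}. (-1::'a) ^ (card A + card B))
      = (\<Sum>A\<in>Pow X. (-1) ^ card A * (\<Sum>B\<in>Pow (Y - A). (-1) ^ card B))"
    unfolding pairs using assms
    by (subst sum.Sigma[symmetric]) (auto simp: power_add sum_distrib_left)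
  also have "\<dots> = (\<Sum>A\<in>Pow X. if Y \<subseteq> A then (-1) ^ card A else 0)"
    using assms by (intro sum.cong) (auto simp: sum_neg_one_power_card_Pow finite_subset)
  also have "\<dots> = (\<Sum>A | A \<subseteq> X \<and> Y \<subseteq> A. (-1) ^ card A)"
    using assms by (simp add: sum.inter_filter[symmetric] Pow_def conj_commute)
  also have "\<dots> = (if X = Y then (-1) ^ card X else 0)"
  proof -
    consider "Y \<subset> X" | "X = Y" | "\<not> Y \<subseteq> X" by blast
    then show ?thesis
    proof cases
      case 1
      then show ?thesis
        using assms by (auto intro!: sum_alternating_cancels card_subsupersets_even_odd)
    next
      case 2
      then have "{A. A \<subseteq> X \<and> Y \<subseteq> A} = {X}" by auto
      then show ?thesis using 2 by simp
    next
      case 3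
      then have "{A. A \<subseteq> X \<and> Y \<subseteq> A} = {}" "X \<noteq> Y" by auto
      then show ?thesis by (simp only: sum.empty if_False)
    qed
  qed
  finally show ?thesis .
qed

section \<open>Sinks and sources\<close>

definition is_source :: "sgraph \<Rightarrow> (nat \<Rightarrow> bool \<Rightarrow> bool) \<Rightarrow> nat \<Rightarrow> bool" where
  "is_source G arr v \<longleftrightarrow> v \<in> verts G \<and> (\<forall>e\<in>edges G. \<forall>b. endpt G e b = v \<longrightarrow> \<not> arr e b)"

lemma endpt_in_verts: "signed_graph G \<Longrightarrow> e \<in> edges G \<Longrightarrow> endpt G e b \<in> verts G"
  by (auto simp: signed_graph_def endpt_def)

lemma sgnval_cases: "sgnval G e = 1 \<or> sgnval G e = -1"
  by (auto simp: sgnval_def)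

lemma orientation_half_edge:
  assumes "orientation G arr" "e \<in> edges G"
  shows "sgnval G e = 1 \<longleftrightarrow> arr e b \<noteq> arr e (\<not> b)"
  using assms unfolding orientation_def sgnval_def by (cases b) auto

lemma proper_half_edge:
  assumes "proper G \<kappa>" "e \<in> edges G"
  shows "\<kappa> (endpt G e b) \<noteq> sgnval G e * \<kappa> (endpt G e (\<not> b))"
  using assms sgnval_cases[of G e] unfolding proper_def endpt_def by (cases b) auto

definition delete_verts :: "sgraph \<Rightarrow> nat set \<Rightarrow> sgraph" where
  "delete_verts G S = G\<lparr>verts := verts G - S,
     edges := {e \<in> edges G. fst (ends G e) \<notin> S \<and> snd (ends G e) \<notin> S}\<rparr>"

lemma delete_verts_simps [simp]:
  "verts (delete_verts G S) = verts G - S"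
  "edges (delete_verts G S) = {e \<in> edges G. fst (ends G e) \<notin> S \<and> snd (ends G e) \<notin> S}"
  "ends (delete_verts G S) = ends G"
  "endpt (delete_verts G S) = endpt G"
  "sgnval (delete_verts G S) = sgnval G"
  by (auto simp: delete_verts_def endpt_def sgnval_def fun_eq_iff)

lemma endpt_delete_verts:
  "signed_graph G \<Longrightarrow> e \<in> edges (delete_verts G S) \<Longrightarrow> endpt G e b \<in> verts G - S"
  by (cases b) (auto simp: endpt_def signed_graph_def)

lemma signed_graph_delete_verts: "signed_graph G \<Longrightarrow> signed_graph (delete_verts G S)"
  by (auto simp: signed_graph_def)

lemma signed_poset_delete_verts:
  assumes "signed_poset G arr"
  shows "signed_poset (delete_verts G S) arr"
proof -
  have "is_cycle G arr vs es" if "is_cycle (delete_verts G S) arr vs es" for vs es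
    using that unfolding is_cycle_def by auto
  then show ?thesis
    using assms unfolding signed_poset_def signed_graph_def acyclic_orientation_def orientation_def
    by (auto simp: delete_verts_def)
qed

fun walk :: "sgraph \<Rightarrow> nat list \<Rightarrow> nat list \<Rightarrow> bool" where
  "walk G [v] [] = True"
| "walk G (v # w # vs) (e # es) \<longleftrightarrow>
     e \<in> edges G \<and> (ends G e = (v, w) \<or> ends G e = (w, v)) \<and> walk G (w # vs) es"
| "walk G _ _ = False"

lemma walk_length: "walk G vs es \<Longrightarrow> length vs = Suc (length es)"
  by (induction G vs es rule: walk.induct) auto

lemma walk_nth:
  "walk G vs es \<Longrightarrow> i < length es \<Longrightarrow>
     es ! i \<in> edges G \<and> (ends G (es ! i) = (vs ! i, vs ! Suc i) \<or> ends G (es ! i) = (vs ! Suc i, vs ! i))"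
proof (induction G vs es arbitrary: i rule: walk.induct)
  case (2 G v w vs e es)
  then show ?case by (cases i) auto
qed auto

lemma walk_Cons:
  "walk G (v # vs) (e # es) \<longleftrightarrow> vs \<noteq> [] \<and> e \<in> edges G \<and>
     (ends G e = (v, hd vs) \<or> ends G e = (hd vs, v)) \<and> walk G vs es"
  by (cases vs) auto

lemma walk_detour:
  assumes "walk G (vs1 @ w # vs2) (es1 @ es2)" "length es1 = length vs1"
    and "e \<in> edges G" "ends G e = (w, x) \<or> ends G e = (x, w)"
  shows "walk G (vs1 @ w # x # w # vs2) (es1 @ e # e # es2)"
  using assms
proof (induction vs1 arbitrary: es1)
  case Nil
  then show ?case by (auto simp: walk_Cons)
next
  case (Cons v vs1)
  then obtain e1 es1' where "es1 = e1 # es1'" by (cases es1) auto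
  with Cons show ?case by (cases vs1) (auto simp: walk_Cons)
qed

lemma walk_incident:
  "walk G vs es \<Longrightarrow> es \<noteq> [] \<Longrightarrow> w \<in> set vs \<Longrightarrow> \<exists>e\<in>set es. \<exists>b. endpt G e b = w"
proof (induction G vs es rule: walk.induct)
  case (2 G v u vs e es)
  show ?case
  proof (cases "w = v \<or> w = u")
    case True
    then have "endpt G e True = w \<or> endpt G e False = w" using 2(2) by (auto simp: endpt_def)
    then show ?thesis by auto
  next
    case False
    have walk: "walk G (u # vs) es" using 2(2) by simp
    have "w \<in> set (u # vs)" "vs \<noteq> []" using False 2(4) by auto
    moreover have "es \<noteq> []" using walk_length[OF walk] \<open>vs \<noteq> []\<close> by auto
    ultimately show ?thesis using 2(1)[OF walk] by auto
  qed
qed auto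

lemma is_cycleI:
  assumes "walk G vs es" "es \<noteq> []" "hd vs = last vs"
    and "\<forall>w\<in>set vs. (\<exists>e\<in>set es. \<exists>b. endpt G e b = w \<and> arr e b) \<and>
                     (\<exists>e\<in>set es. \<exists>b. endpt G e b = w \<and> \<not> arr e b)"
  shows "is_cycle G arr vs es"
proof -
  have len: "length vs = Suc (length es)" by (rule walk_length[OF assms(1)])
  then have "vs ! 0 = vs ! length es"
    using assms(3) by (metis diff_Suc_1 hd_conv_nth last_conv_nth list.size(3) nat.distinct(1))
  then show ?thesis
    unfolding is_cycle_def using assms len walk_nth[OF assms(1)] by (auto simp: Suc_le_eq)
qed

lemma walk_edges: "walk G vs es \<Longrightarrow> set es \<subseteq> edges G"
  by (induction G vs es rule: walk.induct) auto

lemma closed_walk_detour: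
  assumes "walk G vs es" "hd vs = last vs" "w \<in> set vs" "e \<in> edges G" "endpt G e b = w"
  shows "\<exists>vs' es'. walk G vs' es' \<and> es' \<noteq> [] \<and> hd vs' = last vs' \<and> set es' = insert e (set es)"
proof -
  obtain vs1 vs2 where vs: "vs = vs1 @ w # vs2" using split_list[OF assms(3)] by blast
  define es1 where "es1 = take (length vs1) es"
  define es2 where "es2 = drop (length vs1) es"
  define x where "x = endpt G e (\<not> b)"
  have "length es1 = length vs1" using walk_length[OF assms(1)] vs by (simp add: es1_def)
  moreover have "ends G e = (w, x) \<or> ends G e = (x, w)"
    using assms(5) unfolding x_def endpt_def by (cases b) auto
  ultimately have "walk G (vs1 @ w # x # w # vs2) (es1 @ e # e # es2)"
    using walk_detour[of G vs1 w vs2 es1 es2 e] assms(1,4) vs by (simp add: es1_def es2_def)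
  moreover have "hd (vs1 @ w # x # w # vs2) = last (vs1 @ w # x # w # vs2)"
    using assms(2) vs by (cases vs1; cases vs2) auto
  moreover have "es = es1 @ es2" by (simp add: es1_def es2_def)
  then have "set (es1 @ e # e # es2) = insert e (set es)" by auto
  ultimately show ?thesis by blast
qed

text \<open>A closed walk with the largest number of distinct edges is a cycle: at a vertex lacking an
  incoming or an outgoing arrow, a detour along an unused edge would enlarge it.\<close>
lemma exists_incident_sink_or_source:
  assumes sp: "signed_poset G arr" and e0: "e0 \<in> edges G"
  shows "\<exists>e\<in>edges G. \<exists>b. is_sink G arr (endpt G e b) \<or> is_source G arr (endpt G e b)"
proof (rule ccontr)
  assume none: "\<not> ?thesis"
  have sg: "signed_graph G" and acyclic: "\<nexists>vs es. is_cycle G arr vs es"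
    using sp by (auto simp: signed_poset_def acyclic_orientation_def)
  have fin: "finite (edges G)" using sg by (simp add: signed_graph_def)
  define closed where "closed = (\<lambda>(vs, es). walk G vs es \<and> es \<noteq> [] \<and> hd vs = last vs)"
  obtain a b where "ends G e0 = (a, b)" by fastforce
  then have "closed ([a, b, a], [e0, e0])" using e0 by (simp add: closed_def)
  moreover have "\<forall>p. closed p \<longrightarrow> card (set (snd p)) < Suc (card (edges G))"
  proof (intro allI impI)
    fix p assume "closed p"
    then have "set (snd p) \<subseteq> edges G" using walk_edges by (auto simp: closed_def split: prod.splits)
    then show "card (set (snd p)) < Suc (card (edges G))" using fin by (simp add: card_mono less_Suc_eq_le)
  qed
  ultimately obtain p where "closed p"
    and maximal: "\<forall>q. closed q \<longrightarrow> card (set (snd q)) \<le> card (set (snd p))"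
    using Lattices_Big.ex_has_greatest_nat[of closed _ "\<lambda>p. card (set (snd p))"] by blast
  then obtain vs es where p: "p = (vs, es)" and "closed (vs, es)" by (cases p) auto
  then have walk: "walk G vs es" "es \<noteq> []" "hd vs = last vs" by (auto simp: closed_def)
  define in_and_out where "in_and_out w \<longleftrightarrow>
    (\<exists>e\<in>set es. \<exists>b. endpt G e b = w \<and> arr e b) \<and> (\<exists>e\<in>set es. \<exists>b. endpt G e b = w \<and> \<not> arr e b)"
    for w
  have "\<not> is_cycle G arr vs es" using acyclic by blast
  then have "\<not> (\<forall>w\<in>set vs. in_and_out w)"
    unfolding in_and_out_def by (rule contrapos_nn) (rule is_cycleI[OF walk])
  then obtain w where w: "w \<in> set vs" and lacks: "\<not> in_and_out w" by blast
  obtain e1 b1 where "e1 \<in> set es" "endpt G e1 b1 = w"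
    using walk_incident[OF walk(1,2) w] by blast
  then have "w \<in> verts G" "\<not> is_sink G arr w" "\<not> is_source G arr w"
    using none endpt_in_verts[OF sg] walk_edges[OF walk(1)] by blast+
  then obtain e b where e: "e \<in> edges G" "endpt G e b = w" "e \<notin> set es"
    using lacks unfolding in_and_out_def is_sink_def is_source_def by blast
  then obtain vs' es' where detour: "closed (vs', es')" "set es' = insert e (set es)"
    using closed_walk_detour[OF walk(1,3) w e(1,2)] by (auto simp: closed_def)
  have "card (insert e (set es)) \<le> card (set es)"
    using maximal[rule_format, OF detour(1)] detour(2) p by simp
  then show False using e(3) by simp
qed

lemma sinks_eq_sources_iff:
  assumes "signed_poset G arr"
  shows "{v. is_sink G arr v} = {v. is_source G arr v} \<longleftrightarrow> edges G = {}"
proof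
  assume eq: "{v. is_sink G arr v} = {v. is_source G arr v}"
  show "edges G = {}"
  proof (rule ccontr)
    assume "edges G \<noteq> {}"
    then obtain e b where "is_sink G arr (endpt G e b) \<or> is_source G arr (endpt G e b)" "e \<in> edges G"
      using exists_incident_sink_or_source[OF assms] by blast
    then show False using eq unfolding is_sink_def is_source_def by blast
  qed
qed (auto simp: is_sink_def is_source_def)

section \<open>Gapless colourings\<close>

definition level :: "int set \<Rightarrow> int" where
  "level X = Max (insert 0 (abs ` X))"

definition gapless :: "int set \<Rightarrow> bool" where
  "gapless X \<longleftrightarrow> (\<forall>x\<in>X. {1..\<bar>x\<bar>} \<subseteq> abs ` X)"

lemma abs_le_level: "finite X \<Longrightarrow> x \<in> X \<Longrightarrow> \<bar>x\<bar> \<le> level X"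
  unfolding level_def by (rule Max_ge) auto

lemma level_nonneg: "finite X \<Longrightarrow> 0 \<le> level X"
  unfolding level_def by (rule Max_ge) auto

lemma level_le_iff: "finite X \<Longrightarrow> level X \<le> k \<longleftrightarrow> 0 \<le> k \<and> (\<forall>x\<in>X. \<bar>x\<bar> \<le> k)"
  unfolding level_def by (subst Max_le_iff) auto

lemma level_attained: "finite X \<Longrightarrow> level X \<noteq> 0 \<Longrightarrow> \<exists>x\<in>X. \<bar>x\<bar> = level X"
  unfolding level_def using Max_in[of "insert 0 (abs ` X)"] by auto

lemma level_eqI: "finite X \<Longrightarrow> \<forall>x\<in>X. \<bar>x\<bar> \<le> k \<Longrightarrow> x0 \<in> X \<Longrightarrow> \<bar>x0\<bar> = k \<Longrightarrow> level X = k"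
  using level_le_iff[of X k] abs_le_level[of X x0] by fastforce

lemma gapless_level_range:
  assumes "finite X" "gapless X"
  shows "{1..level X} \<subseteq> abs ` X"
  using level_attained[OF assms(1)] assms(2) unfolding gapless_def by fastforce

lemma abs_le_card_if_gapless:
  assumes "finite X" "gapless X" "x \<in> X"
  shows "\<bar>x\<bar> \<le> int (card X)"
proof -
  have "card {1..\<bar>x\<bar>} \<le> card (abs ` X)"
    using assms unfolding gapless_def by (intro card_mono) auto
  also have "\<dots> \<le> card X" using assms(1) by (rule card_image_le)
  finally show ?thesis by simp
qed

lemma gapless_add_level:
  assumes "finite X" "gapless X" "finite Y" "abs ` Y = {level X + 1}"
  shows "gapless (X \<union> Y)" "level (X \<union> Y) = level X + 1"
proof -
  have "{1..level X + 1} = {1..level X} \<union> {level X + 1}"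
    using level_nonneg[OF assms(1)] by auto
  then have range: "{1..level X + 1} \<subseteq> abs ` (X \<union> Y)"
    using gapless_level_range[OF assms(1,2)] assms(4) by (auto simp: image_Un)
  have bound: "\<bar>x\<bar> \<le> level X + 1" if "x \<in> X \<union> Y" for x
  proof (cases "x \<in> X")
    case True
    then show ?thesis using abs_le_level[OF assms(1)] by fastforce
  next
    case False
    then have "\<bar>x\<bar> \<in> abs ` Y" using that by blast
    then show ?thesis using assms(4) by simp
  qed
  show "gapless (X \<union> Y)"
    unfolding gapless_def
  proof
    fix x assume "x \<in> X \<union> Y"
    then have "{1..\<bar>x\<bar>} \<subseteq> {1..level X + 1}" using bound by auto
    then show "{1..\<bar>x\<bar>} \<subseteq> abs ` (X \<union> Y)" using range by blast
  qed
  obtain y where "y \<in> Y" "\<bar>y\<bar> = level X + 1" using assms(4) by (metis imageE insertI1)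
  then show "level (X \<union> Y) = level X + 1"
    using bound assms(1,3) by (intro level_eqI) auto
qed

lemma gapless_remove_level:
  assumes "finite X" "gapless X" "1 \<le> level X"
  shows "gapless {x\<in>X. \<bar>x\<bar> \<noteq> level X}" "level {x\<in>X. \<bar>x\<bar> \<noteq> level X} = level X - 1"
proof -
  let ?X = "{x\<in>X. \<bar>x\<bar> \<noteq> level X}"
  have fin: "finite ?X" using assms(1) by simp
  have below: "\<bar>x\<bar> \<le> level X - 1" if "x \<in> ?X" for x
    using abs_le_level[OF assms(1)] that by fastforce
  have range: "{1..level X - 1} \<subseteq> abs ` ?X"
  proof
    fix j assume j: "j \<in> {1..level X - 1}"
    then have "j \<in> abs ` X" using gapless_level_range[OF assms(1,2)] by auto
    then obtain x where "x \<in> X" "j = \<bar>x\<bar>" by blast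
    then show "j \<in> abs ` ?X" using j by auto
  qed
  show "gapless ?X"
    unfolding gapless_def
  proof
    fix x assume "x \<in> ?X"
    then have "{1..\<bar>x\<bar>} \<subseteq> {1..level X - 1}" using below by auto
    then show "{1..\<bar>x\<bar>} \<subseteq> abs ` ?X" using range by blast
  qed
  show "level ?X = level X - 1"
  proof (cases "level X = 1")
    case True
    then show ?thesis using below level_nonneg[OF fin] level_le_iff[OF fin, of 0] by auto
  next
    case False
    then have "level X - 1 \<in> abs ` ?X" using range assms(3) by auto
    then obtain x where "x \<in> ?X" "\<bar>x\<bar> = level X - 1" by auto
    then show ?thesis using below fin by (intro level_eqI) auto
  qed
qed

definition colour_level :: "sgraph \<Rightarrow> (nat \<Rightarrow> int) \<Rightarrow> int" where
  "colour_level G \<kappa> = level (\<kappa> ` verts G)"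

definition gapless_colourings :: "sgraph \<Rightarrow> (nat \<Rightarrow> bool \<Rightarrow> bool) \<Rightarrow> (nat \<Rightarrow> int) set" where
  "gapless_colourings G arr = {\<kappa> \<in> verts G \<rightarrow>\<^sub>E UNIV.
     proper G \<kappa> \<and> preserves G arr \<kappa> \<and> gapless (\<kappa> ` verts G)}"

definition top_verts :: "sgraph \<Rightarrow> (nat \<Rightarrow> int) \<Rightarrow> nat set" where
  "top_verts G \<kappa> = {v \<in> verts G. \<kappa> v = colour_level G \<kappa>}"

definition bottom_verts :: "sgraph \<Rightarrow> (nat \<Rightarrow> int) \<Rightarrow> nat set" where
  "bottom_verts G \<kappa> = {v \<in> verts G. \<kappa> v = - colour_level G \<kappa>}"

lemma colour_level_nonneg: "signed_graph G \<Longrightarrow> 0 \<le> colour_level G \<kappa>"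
  unfolding colour_level_def signed_graph_def by (simp add: level_nonneg)

lemma abs_le_colour_level: "signed_graph G \<Longrightarrow> v \<in> verts G \<Longrightarrow> \<bar>\<kappa> v\<bar> \<le> colour_level G \<kappa>"
  unfolding colour_level_def signed_graph_def by (simp add: abs_le_level)

lemma finite_gapless_colourings:
  assumes "finite (verts G)"
  shows "finite (gapless_colourings G arr)"
proof -
  let ?n = "int (card (verts G))"
  have bound: "\<bar>\<kappa> v\<bar> \<le> ?n" if "\<kappa> \<in> gapless_colourings G arr" "v \<in> verts G" for \<kappa> v
  proof -
    have "\<bar>\<kappa> v\<bar> \<le> int (card (\<kappa> ` verts G))"
      using that assms by (intro abs_le_card_if_gapless) (auto simp: gapless_colourings_def)
    also have "\<dots> \<le> ?n" using assms by (simp add: card_image_le)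
    finally show ?thesis .
  qed
  have "gapless_colourings G arr \<subseteq> verts G \<rightarrow>\<^sub>E {-?n..?n}"
  proof
    fix \<kappa> assume \<kappa>: "\<kappa> \<in> gapless_colourings G arr"
    then have "\<kappa> v \<in> {-?n..?n}" if "v \<in> verts G" for v
      using bound[OF \<kappa> that] by (simp add: abs_le_iff)
    then show "\<kappa> \<in> verts G \<rightarrow>\<^sub>E {-?n..?n}"
      using \<kappa> by (simp add: gapless_colourings_def PiE_iff)
  qed
  moreover have "finite (verts G \<rightarrow>\<^sub>E {-?n..?n})" using assms by (intro finite_PiE) auto
  ultimately show ?thesis by (rule finite_subset)
qed

lemma arrow_at_extreme_colour:
  assumes sg: "signed_graph G" and \<kappa>: "proper G \<kappa>" "preserves G arr \<kappa>"
    and e: "e \<in> edges G" and extreme: "\<bar>\<kappa> (endpt G e b)\<bar> = colour_level G \<kappa>"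
  shows "arr e b \<longleftrightarrow> 0 < \<kappa> (endpt G e b)"
proof -
  let ?v = "endpt G e b" and ?u = "endpt G e (\<not> b)"
  have "\<bar>sgnval G e * \<kappa> ?u\<bar> \<le> colour_level G \<kappa>"
    using abs_le_colour_level[OF sg endpt_in_verts[OF sg e]] sgnval_cases[of G e] by auto
  moreover have "\<kappa> ?v \<noteq> sgnval G e * \<kappa> ?u" by (rule proper_half_edge[OF \<kappa>(1) e])
  moreover have "arr e b \<longleftrightarrow> sgnval G e * \<kappa> ?u < \<kappa> ?v" using \<kappa>(2) e by (simp add: preserves_def)
  ultimately show ?thesis using extreme by arith
qed

lemma top_verts_sinks:
  assumes "signed_graph G" "\<kappa> \<in> gapless_colourings G arr" "1 \<le> colour_level G \<kappa>"
  shows "top_verts G \<kappa> \<subseteq> {v. is_sink G arr v}"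
  using assms arrow_at_extreme_colour[OF assms(1)]
  unfolding top_verts_def is_sink_def gapless_colourings_def by fastforce

lemma bottom_verts_sources:
  assumes "signed_graph G" "\<kappa> \<in> gapless_colourings G arr"
  shows "bottom_verts G \<kappa> \<subseteq> {v. is_source G arr v}"
  using assms arrow_at_extreme_colour[OF assms(1)] colour_level_nonneg[OF assms(1), of \<kappa>]
  unfolding bottom_verts_def is_source_def gapless_colourings_def by fastforce

lemma top_bottom_verts_disjoint: "1 \<le> colour_level G \<kappa> \<Longrightarrow> top_verts G \<kappa> \<inter> bottom_verts G \<kappa> = {}"
  by (auto simp: top_verts_def bottom_verts_def)

lemma top_bottom_verts_nonempty:
  assumes "signed_graph G" "1 \<le> colour_level G \<kappa>"
  shows "top_verts G \<kappa> \<union> bottom_verts G \<kappa> \<noteq> {}"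
proof -
  obtain v where "v \<in> verts G" "\<bar>\<kappa> v\<bar> = colour_level G \<kappa>"
    using level_attained[of "\<kappa> ` verts G"] assms by (auto simp: colour_level_def signed_graph_def)
  then show ?thesis by (auto simp: top_verts_def bottom_verts_def abs_if split: if_splits)
qed

lemma colour_level_zero_colouring: "signed_graph G \<Longrightarrow> colour_level G (\<lambda>v\<in>verts G. 0) = 0"
  using colour_level_nonneg[of G "\<lambda>v\<in>verts G. 0"]
  unfolding colour_level_def signed_graph_def by (auto simp: level_le_iff intro!: antisym)

lemma gapless_colourings_level_zero:
  assumes sg: "signed_graph G"
  shows "{\<kappa> \<in> gapless_colourings G arr. colour_level G \<kappa> = 0} =
    (if edges G = {} then {\<lambda>v\<in>verts G. 0} else {})"
proof -
  have zero: "\<kappa> = (\<lambda>v\<in>verts G. 0)" if "\<kappa> \<in> gapless_colourings G arr" "colour_level G \<kappa> = 0" for \<kappa>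
  proof
    fix v show "\<kappa> v = (\<lambda>v\<in>verts G. 0) v"
      using that abs_le_colour_level[OF sg, of v \<kappa>]
      by (cases "v \<in> verts G") (auto simp: gapless_colourings_def PiE_iff extensional_def)
  qed
  show ?thesis
  proof (cases "edges G = {}")
    case True
    have "(\<lambda>v\<in>verts G. 0) \<in> gapless_colourings G arr"
      using True by (auto simp: gapless_colourings_def proper_def preserves_def gapless_def)
    then have "{\<kappa> \<in> gapless_colourings G arr. colour_level G \<kappa> = 0} = {\<lambda>v\<in>verts G. 0}"
      using zero colour_level_zero_colouring[OF sg] by blast
    then show ?thesis using True by simp
  next
    case False
    then obtain e where e: "e \<in> edges G" by blast
    have "\<not> proper G (\<lambda>v\<in>verts G. 0)"
      using e sg by (auto simp: proper_def signed_graph_def)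
    then have "{\<kappa> \<in> gapless_colourings G arr. colour_level G \<kappa> = 0} = {}"
      using zero unfolding gapless_colourings_def by blast
    then show ?thesis using False by simp
  qed
qed

section \<open>Peeling off the extreme layers\<close>

definition extend_colouring :: "nat set \<Rightarrow> nat set \<Rightarrow> int \<Rightarrow> (nat \<Rightarrow> int) \<Rightarrow> nat \<Rightarrow> int" where
  "extend_colouring A B k \<kappa> v = (if v \<in> A then k else if v \<in> B then - k else \<kappa> v)"

lemma inj_on_extend_colouring:
  assumes "X \<inter> (A \<union> B) = {}"
  shows "inj_on (\<lambda>\<kappa>. extend_colouring A B (k \<kappa>) \<kappa>) (extensional X)"
proof (rule inj_onI)
  fix \<kappa>1 \<kappa>2 assume \<kappa>s: "\<kappa>1 \<in> extensional X" "\<kappa>2 \<in> extensional X"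
    and eq: "extend_colouring A B (k \<kappa>1) \<kappa>1 = extend_colouring A B (k \<kappa>2) \<kappa>2"
  show "\<kappa>1 = \<kappa>2"
  proof
    fix v show "\<kappa>1 v = \<kappa>2 v"
    proof (cases "v \<in> X")
      case True
      then have "v \<notin> A" "v \<notin> B" using assms by auto
      then show ?thesis using fun_cong[OF eq, of v] by (simp add: extend_colouring_def)
    next
      case False
      then show ?thesis using \<kappa>s by (simp add: extensional_def)
    qed
  qed
qed

lemma proper_delete_verts_restrict:
  "signed_graph G \<Longrightarrow> proper G \<kappa> \<Longrightarrow> proper (delete_verts G S) (restrict \<kappa> (verts G - S))"
  by (auto simp: proper_def signed_graph_def)

lemma preserves_delete_verts_restrict:
  assumes "signed_graph G" "preserves G arr \<kappa>"
  shows "preserves (delete_verts G S) arr (restrict \<kappa> (verts G - S))"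
  using assms endpt_delete_verts[OF assms(1)] by (auto simp: preserves_def)

lemma extend_colouring_half_edge:
  assumes sg: "signed_graph G" and ori: "orientation G arr"
    and A: "A \<subseteq> {v. is_sink G arr v}" and B: "B \<subseteq> {v. is_source G arr v}" and AB: "A \<inter> B = {}"
    and \<kappa>: "proper (delete_verts G (A \<union> B)) \<kappa>" "preserves (delete_verts G (A \<union> B)) arr \<kappa>"
    and k: "0 < k" and small: "\<forall>v\<in>verts G - (A \<union> B). \<bar>\<kappa> v\<bar> < k"
    and e: "e \<in> edges G"
  defines "\<kappa>' \<equiv> extend_colouring A B k \<kappa>"
  shows "(arr e b \<longleftrightarrow> sgnval G e * \<kappa>' (endpt G e (\<not> b)) < \<kappa>' (endpt G e b)) \<and>
    \<kappa>' (endpt G e b) \<noteq> sgnval G e * \<kappa>' (endpt G e (\<not> b))"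
proof -
  define v u where "v = endpt G e b" and "u = endpt G e (\<not> b)"
  have "v \<in> verts G" "u \<in> verts G" unfolding v_def u_def using endpt_in_verts[OF sg e] by auto
  have sgn: "sgnval G e = 1 \<longleftrightarrow> arr e b \<noteq> arr e (\<not> b)" by (rule orientation_half_edge[OF ori e])
  have arrows: "v \<in> A \<Longrightarrow> arr e b" "v \<in> B \<Longrightarrow> \<not> arr e b"
    "u \<in> A \<Longrightarrow> arr e (\<not> b)" "u \<in> B \<Longrightarrow> \<not> arr e (\<not> b)"
    using A B e unfolding v_def u_def is_sink_def is_source_def by auto
  have inner: "(arr e b \<longleftrightarrow> sgnval G e * \<kappa> u < \<kappa> v) \<and> \<kappa> v \<noteq> sgnval G e * \<kappa> u"
    if "v \<notin> A \<union> B" "u \<notin> A \<union> B"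
  proof -
    have "e \<in> edges (delete_verts G (A \<union> B))"
      using that e unfolding v_def u_def endpt_def by (cases b) auto
    then show ?thesis
      using \<kappa> proper_half_edge[OF \<kappa>(1), of e b] unfolding preserves_def v_def u_def by auto
  qed
  have "\<bar>\<kappa> v\<bar> < k" if "v \<notin> A \<union> B" using small that \<open>v \<in> verts G\<close> by blast
  moreover have "\<bar>\<kappa> u\<bar> < k" if "u \<notin> A \<union> B" using small that \<open>u \<in> verts G\<close> by blast
  ultimately show ?thesis
    unfolding v_def[symmetric] u_def[symmetric] \<kappa>'_def extend_colouring_def
    using sgnval_cases[of G e] sgn arrows inner AB k
    by (cases "v \<in> A"; cases "v \<in> B"; cases "u \<in> A"; cases "u \<in> B"; cases "sgnval G e = 1")
      (auto simp: abs_less_iff)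
qed

lemma extend_gapless_colouring:
  assumes sg: "signed_graph G" and ori: "orientation G arr"
    and A: "A \<subseteq> {v. is_sink G arr v}" and B: "B \<subseteq> {v. is_source G arr v}"
    and AB: "A \<inter> B = {}" and ne: "A \<union> B \<noteq> {}"
    and \<kappa>: "\<kappa> \<in> gapless_colourings (delete_verts G (A \<union> B)) arr"
  defines "k \<equiv> colour_level (delete_verts G (A \<union> B)) \<kappa> + 1"
  shows "extend_colouring A B k \<kappa> \<in> gapless_colourings G arr"
    and "colour_level G (extend_colouring A B k \<kappa>) = k"
    and "top_verts G (extend_colouring A B k \<kappa>) = A"
    and "bottom_verts G (extend_colouring A B k \<kappa>) = B"
proof -
  let ?\<kappa> = "extend_colouring A B k \<kappa>"
  let ?S = "A \<union> B" and ?H = "delete_verts G (A \<union> B)"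
  have sgH: "signed_graph ?H" by (rule signed_graph_delete_verts[OF sg])
  have fin: "finite (verts G)" using sg by (simp add: signed_graph_def)
  have SV: "?S \<subseteq> verts G" using A B by (auto simp: is_sink_def is_source_def)
  then have finS: "finite ?S" using fin by (rule finite_subset)
  have k: "0 < k" using colour_level_nonneg[OF sgH] by (simp add: k_def)
  have small: "\<bar>\<kappa> v\<bar> < k" if "v \<in> verts G - ?S" for v
    using abs_le_colour_level[OF sgH, of v \<kappa>] that by (simp add: k_def)
  have \<kappa>H: "proper ?H \<kappa>" "preserves ?H arr \<kappa>" "gapless (\<kappa> ` (verts G - ?S))"
    using \<kappa> by (auto simp: gapless_colourings_def)
  have edge: "(arr e b \<longleftrightarrow> sgnval G e * ?\<kappa> (endpt G e (\<not> b)) < ?\<kappa> (endpt G e b)) \<and>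
      ?\<kappa> (endpt G e b) \<noteq> sgnval G e * ?\<kappa> (endpt G e (\<not> b))" if "e \<in> edges G" for e b
    using extend_colouring_half_edge[OF sg ori A B AB \<kappa>H(1,2) k _ that] small by blast
  have image: "?\<kappa> ` verts G = \<kappa> ` (verts G - ?S) \<union> ?\<kappa> ` ?S"
    using SV by (auto simp: extend_colouring_def)
  have "abs ` ?\<kappa> ` ?S = (\<lambda>_. k) ` ?S"
    unfolding image_image using AB k by (intro image_cong) (auto simp: extend_colouring_def)
  also have "\<dots> = {k}" using ne by (simp add: image_constant_conv)
  finally have "abs ` ?\<kappa> ` ?S = {k}" .
  then have top: "abs ` ?\<kappa> ` ?S = {level (\<kappa> ` (verts G - ?S)) + 1}"
    by (simp add: k_def colour_level_def)
  have "gapless (?\<kappa> ` verts G)"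
    unfolding image using gapless_add_level(1)[OF _ \<kappa>H(3) _ top] fin finS by simp
  moreover have "proper G ?\<kappa>" using edge[of _ True] by (auto simp: proper_def endpt_def)
  moreover have "preserves G arr ?\<kappa>" using edge by (simp add: preserves_def)
  moreover have "?\<kappa> \<in> extensional (verts G)"
    using \<kappa> SV by (auto simp: extend_colouring_def gapless_colourings_def PiE_iff extensional_def)
  ultimately show "?\<kappa> \<in> gapless_colourings G arr" by (simp add: gapless_colourings_def PiE_iff)
  show level: "colour_level G ?\<kappa> = k"
    unfolding colour_level_def image using gapless_add_level(2)[OF _ \<kappa>H(3) _ top] fin finS
    by (simp add: k_def colour_level_def)
  have "?\<kappa> v = k \<longleftrightarrow> v \<in> A" "?\<kappa> v = - k \<longleftrightarrow> v \<in> B" if "v \<in> verts G" for v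
    using small[of v] that AB k by (auto simp: extend_colouring_def)
  then show "top_verts G ?\<kappa> = A" "bottom_verts G ?\<kappa> = B"
    unfolding top_verts_def bottom_verts_def level using SV by auto
qed

lemma restrict_gapless_colouring:
  assumes sg: "signed_graph G" and \<kappa>: "\<kappa> \<in> gapless_colourings G arr"
    and L: "1 \<le> colour_level G \<kappa>"
  defines "S \<equiv> top_verts G \<kappa> \<union> bottom_verts G \<kappa>"
  shows "restrict \<kappa> (verts G - S) \<in> gapless_colourings (delete_verts G S) arr"
    and "colour_level (delete_verts G S) (restrict \<kappa> (verts G - S)) = colour_level G \<kappa> - 1"
    and "extend_colouring (top_verts G \<kappa>) (bottom_verts G \<kappa>) (colour_level G \<kappa>)
           (restrict \<kappa> (verts G - S)) = \<kappa>"
proof -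
  let ?L = "colour_level G \<kappa>" and ?r = "restrict \<kappa> (verts G - S)"
  have fin: "finite (verts G)" using sg by (simp add: signed_graph_def)
  have \<kappa>G: "\<kappa> \<in> extensional (verts G)" "proper G \<kappa>" "preserves G arr \<kappa>" "gapless (\<kappa> ` verts G)"
    using \<kappa> by (auto simp: gapless_colourings_def PiE_iff)
  have "v \<in> S \<longleftrightarrow> \<bar>\<kappa> v\<bar> = ?L" if "v \<in> verts G" for v
    using that L by (auto simp: S_def top_verts_def bottom_verts_def abs_if)
  then have image: "?r ` (verts G - S) = {x \<in> \<kappa> ` verts G. \<bar>x\<bar> \<noteq> level (\<kappa> ` verts G)}"
    by (auto simp: colour_level_def)
  have L': "1 \<le> level (\<kappa> ` verts G)" using L by (simp add: colour_level_def)
  show "?r \<in> gapless_colourings (delete_verts G S) arr"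
    using gapless_remove_level(1)[OF _ \<kappa>G(4) L'] fin image
      proper_delete_verts_restrict[OF sg \<kappa>G(2)] preserves_delete_verts_restrict[OF sg \<kappa>G(3)]
    by (simp add: gapless_colourings_def)
  show "colour_level (delete_verts G S) ?r = ?L - 1"
    using gapless_remove_level(2)[OF _ \<kappa>G(4) L'] fin image by (simp add: colour_level_def)
  show "extend_colouring (top_verts G \<kappa>) (bottom_verts G \<kappa>) ?L ?r = \<kappa>"
    using \<kappa>G(1) unfolding extensional_def
    by (auto simp: extend_colouring_def S_def top_verts_def bottom_verts_def fun_eq_iff)
qed

definition layer_fibre :: "sgraph \<Rightarrow> (nat \<Rightarrow> bool \<Rightarrow> bool) \<Rightarrow> nat set \<Rightarrow> nat set \<Rightarrow> (nat \<Rightarrow> int) set" where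
  "layer_fibre G arr A B = {\<kappa> \<in> gapless_colourings G arr.
     1 \<le> colour_level G \<kappa> \<and> top_verts G \<kappa> = A \<and> bottom_verts G \<kappa> = B}"

lemma sum_layer_fibre:
  assumes sg: "signed_graph G" and ori: "orientation G arr"
    and A: "A \<subseteq> {v. is_sink G arr v}" and B: "B \<subseteq> {v. is_source G arr v}"
    and AB: "A \<inter> B = {}" and ne: "A \<union> B \<noteq> {}"
  shows "(\<Sum>\<kappa>\<in>layer_fibre G arr A B. g (colour_level G \<kappa>)) =
    (\<Sum>\<kappa>\<in>gapless_colourings (delete_verts G (A \<union> B)) arr. g (colour_level (delete_verts G (A \<union> B)) \<kappa> + 1))"
proof -
  let ?H = "delete_verts G (A \<union> B)"
  let ?F = "\<lambda>\<kappa>. extend_colouring A B (colour_level ?H \<kappa> + 1) \<kappa>"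
  note extend = extend_gapless_colouring[OF sg ori A B AB ne]
  have "?F \<kappa> \<in> layer_fibre G arr A B" if "\<kappa> \<in> gapless_colourings ?H arr" for \<kappa>
    using extend[OF that] colour_level_nonneg[OF signed_graph_delete_verts[OF sg, of "A \<union> B"], of \<kappa>]
    by (simp add: layer_fibre_def)
  moreover have "\<kappa> \<in> ?F ` gapless_colourings ?H arr" if "\<kappa> \<in> layer_fibre G arr A B" for \<kappa>
  proof -
    have \<kappa>: "\<kappa> \<in> gapless_colourings G arr" "1 \<le> colour_level G \<kappa>"
      and AB_\<kappa>: "A = top_verts G \<kappa>" "B = bottom_verts G \<kappa>"
      using that by (auto simp: layer_fibre_def)
    note restrict = restrict_gapless_colouring[OF sg \<kappa>, folded AB_\<kappa>]
    have "colour_level ?H (restrict \<kappa> (verts G - (A \<union> B))) + 1 = colour_level G \<kappa>"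
      using restrict(2) by simp
    then have "?F (restrict \<kappa> (verts G - (A \<union> B))) = \<kappa>"
      using restrict(3) by (simp only:)
    then show ?thesis using restrict(1) by (rule image_eqI[OF sym])
  qed
  ultimately have image: "layer_fibre G arr A B = ?F ` gapless_colourings ?H arr" by blast
  have "inj_on ?F (gapless_colourings ?H arr)"
    by (rule inj_on_subset[OF inj_on_extend_colouring[of "verts G - (A \<union> B)"]])
      (auto simp: gapless_colourings_def PiE_iff)
  then show ?thesis
    by (rule sum.reindex_cong[OF _ image]) (simp add: extend(2))
qed

section \<open>The alternating level sum\<close>

lemma sum_gapless_colourings_split_level:
  assumes sg: "signed_graph G"
  shows "(\<Sum>\<kappa>\<in>gapless_colourings G arr. h \<kappa>) = (if edges G = {} then h (\<lambda>v\<in>verts G. 0) else 0) +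
    (\<Sum>\<kappa> | \<kappa> \<in> gapless_colourings G arr \<and> 1 \<le> colour_level G \<kappa>. h \<kappa>)"
proof -
  let ?C = "gapless_colourings G arr"
  have fin: "finite ?C" using sg by (simp add: finite_gapless_colourings signed_graph_def)
  have "?C = {\<kappa> \<in> ?C. colour_level G \<kappa> = 0} \<union> {\<kappa>. \<kappa> \<in> ?C \<and> 1 \<le> colour_level G \<kappa>}"
  proof -
    have "colour_level G \<kappa> = 0 \<or> 1 \<le> colour_level G \<kappa>" for \<kappa>
      using colour_level_nonneg[OF sg, of \<kappa>] by linarith
    then show ?thesis by blast
  qed
  then have "sum h ?C = sum h ({\<kappa> \<in> ?C. colour_level G \<kappa> = 0} \<union> {\<kappa>. \<kappa> \<in> ?C \<and> 1 \<le> colour_level G \<kappa>})"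
    by (rule arg_cong)
  also have "\<dots> = sum h {\<kappa> \<in> ?C. colour_level G \<kappa> = 0} +
      (\<Sum>\<kappa> | \<kappa> \<in> ?C \<and> 1 \<le> colour_level G \<kappa>. h \<kappa>)"
    using fin by (intro sum.union_disjoint) auto
  finally show ?thesis unfolding gapless_colourings_level_zero[OF sg] by simp
qed

lemma sum_gapless_colourings_by_layers:
  fixes arr :: "nat \<Rightarrow> bool \<Rightarrow> bool"
  assumes sg: "signed_graph G"
  defines "layers \<equiv> {(A, B). A \<subseteq> {v. is_sink G arr v} \<and> B \<subseteq> {v. is_source G arr v} \<and>
                          A \<inter> B = {} \<and> A \<union> B \<noteq> {}}"
  shows "(\<Sum>\<kappa> | \<kappa> \<in> gapless_colourings G arr \<and> 1 \<le> colour_level G \<kappa>. h \<kappa>) =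
    (\<Sum>(A, B)\<in>layers. \<Sum>\<kappa>\<in>layer_fibre G arr A B. h \<kappa>)"
proof -
  let ?S = "{\<kappa>. \<kappa> \<in> gapless_colourings G arr \<and> 1 \<le> colour_level G \<kappa>}"
  let ?g = "\<lambda>\<kappa>. (top_verts G \<kappa>, bottom_verts G \<kappa>)"
  have fin: "finite (verts G)" using sg by (simp add: signed_graph_def)
  have "finite ?S" using finite_gapless_colourings[OF fin] by simp
  moreover have "finite layers"
  proof (rule finite_subset)
    show "layers \<subseteq> Pow (verts G) \<times> Pow (verts G)"
      by (auto simp: layers_def is_sink_def is_source_def)
  qed (use fin in simp)
  moreover have "?g ` ?S \<subseteq> layers"
  proof
    fix p assume "p \<in> ?g ` ?S"
    then obtain \<kappa> where \<kappa>: "\<kappa> \<in> gapless_colourings G arr" "1 \<le> colour_level G \<kappa>" and p: "p = ?g \<kappa>"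
      by auto
    show "p \<in> layers"
      unfolding p layers_def
      using top_verts_sinks[OF sg \<kappa>] bottom_verts_sources[OF sg \<kappa>(1)]
        top_bottom_verts_disjoint[OF \<kappa>(2)] top_bottom_verts_nonempty[OF sg \<kappa>(2)] by auto
  qed
  ultimately have "(\<Sum>\<kappa>\<in>?S. h \<kappa>) = (\<Sum>p\<in>layers. \<Sum>\<kappa> | \<kappa> \<in> ?S \<and> ?g \<kappa> = p. h \<kappa>)"
    by (rule sum.group[symmetric])
  also have "\<dots> = (\<Sum>(A, B)\<in>layers. \<Sum>\<kappa>\<in>layer_fibre G arr A B. h \<kappa>)"
    by (intro sum.cong) (auto simp: layer_fibre_def)
  finally show ?thesis by simp
qed

lemma card_verts_delete_verts:
  assumes "finite (verts G)" "A \<union> B \<subseteq> verts G" "A \<inter> B = {}"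
  shows "card (verts (delete_verts G (A \<union> B))) = card (verts G) - (card A + card B)"
    and "card A + card B \<le> card (verts G)"
proof -
  have "finite A" "finite B" using assms(1,2) finite_subset by auto
  then have "card (A \<union> B) = card A + card B" using assms(3) by (rule card_Un_disjoint)
  then show "card (verts (delete_verts G (A \<union> B))) = card (verts G) - (card A + card B)"
    and "card A + card B \<le> card (verts G)"
    using card_mono[OF assms(1,2)] card_Diff_subset[OF _ assms(2)] \<open>finite A\<close> \<open>finite B\<close> by simp_all
qed

lemma alternating_sum_layer_fibre_delete:
  assumes "signed_graph G" "orientation G arr"
    and "A \<subseteq> {v. is_sink G arr v}" "B \<subseteq> {v. is_source G arr v}" "A \<inter> B = {}" "A \<union> B \<noteq> {}"
  shows "(\<Sum>\<kappa>\<in>layer_fibre G arr A B. (-1::'a::comm_ring_1) ^ nat (colour_level G \<kappa>)) =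
    - (\<Sum>\<kappa>\<in>gapless_colourings (delete_verts G (A \<union> B)) arr.
         (-1) ^ nat (colour_level (delete_verts G (A \<union> B)) \<kappa>))"
proof -
  let ?H = "delete_verts G (A \<union> B)"
  have "(\<Sum>\<kappa>\<in>layer_fibre G arr A B. (-1::'a) ^ nat (colour_level G \<kappa>)) =
      (\<Sum>\<kappa>\<in>gapless_colourings ?H arr. (-1) ^ nat (colour_level ?H \<kappa> + 1))"
    by (rule sum_layer_fibre[OF assms])
  also have "\<dots> = - (\<Sum>\<kappa>\<in>gapless_colourings ?H arr. (-1) ^ nat (colour_level ?H \<kappa>))"
    using colour_level_nonneg[OF signed_graph_delete_verts[OF assms(1), of "A \<union> B"]]
    by (simp add: nat_add_distrib sum_negf)
  finally show ?thesis .
qed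

lemma sum_neg_one_power_layers:
  assumes sp: "signed_poset G arr"
  shows "(\<Sum>(A, B)\<in>{(A, B). A \<subseteq> {v. is_sink G arr v} \<and> B \<subseteq> {v. is_source G arr v} \<and>
                          A \<inter> B = {} \<and> A \<union> B \<noteq> {}}. (-1::'a::comm_ring_1) ^ (card A + card B)) =
    (if edges G = {} then (-1) ^ card (verts G) else 0) - 1"
proof -
  define sinks where "sinks = {v. is_sink G arr v}"
  define sources where "sources = {v. is_source G arr v}"
  let ?pairs = "{(A, B). A \<subseteq> sinks \<and> B \<subseteq> sources \<and> A \<inter> B = {}}"
  let ?layers = "{(A, B). A \<subseteq> sinks \<and> B \<subseteq> sources \<and> A \<inter> B = {} \<and> A \<union> B \<noteq> {}}"
  have "finite (verts G)" using sp by (simp add: signed_poset_def signed_graph_def)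
  moreover have "sinks \<subseteq> verts G" "sources \<subseteq> verts G"
    by (auto simp: sinks_def sources_def is_sink_def is_source_def)
  ultimately have fin: "finite sinks" "finite sources" using finite_subset by auto
  have pairs: "?pairs = insert ({}, {}) ?layers" "({}, {}) \<notin> ?layers" by auto
  have "finite ?pairs"
    using fin by (auto intro: finite_subset[of _ "Pow sinks \<times> Pow sources"])
  then have "finite ?layers" unfolding pairs by simp
  then have "(\<Sum>(A, B)\<in>?pairs. (-1::'a) ^ (card A + card B)) =
      1 + (\<Sum>(A, B)\<in>?layers. (-1::'a) ^ (card A + card B))"
    unfolding pairs(1) using pairs(2) by simp
  then have "1 + (\<Sum>(A, B)\<in>?layers. (-1::'a) ^ (card A + card B)) =
      (if sinks = sources then (-1) ^ card sinks else 0)"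
    using sum_neg_one_power_disjoint_pairs[OF fin, where 'a='a] by simp
  moreover have "sinks = sources \<longleftrightarrow> edges G = {}"
    unfolding sinks_def sources_def by (rule sinks_eq_sources_iff[OF sp])
  moreover have "edges G = {} \<Longrightarrow> sinks = verts G"
    by (auto simp: sinks_def is_sink_def)
  ultimately show ?thesis by (auto simp: sinks_def sources_def algebra_simps)
qed

lemma alternating_level_sum:
  assumes "signed_poset G arr"
  shows "(\<Sum>\<kappa>\<in>gapless_colourings G arr. (-1::'a::comm_ring_1) ^ nat (colour_level G \<kappa>)) =
    (-1) ^ card (verts G)"
  using assms
proof (induction "card (verts G)" arbitrary: G rule: less_induct)
  case less
  have sg: "signed_graph G" and ori: "orientation G arr"
    using less.prems by (auto simp: signed_poset_def acyclic_orientation_def)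
  have fin: "finite (verts G)" using sg by (simp add: signed_graph_def)
  define n where "n = card (verts G)"
  let ?C = "gapless_colourings G arr"
  let ?f = "\<lambda>\<kappa>. (-1::'a) ^ nat (colour_level G \<kappa>)"
  let ?layers = "{(A, B). A \<subseteq> {v. is_sink G arr v} \<and> B \<subseteq> {v. is_source G arr v} \<and>
                         A \<inter> B = {} \<and> A \<union> B \<noteq> {}}"
  have fibre: "(\<Sum>\<kappa>\<in>layer_fibre G arr A B. ?f \<kappa>) = - ((-1) ^ n * (-1) ^ (card A + card B))"
    if "(A, B) \<in> ?layers" for A B
  proof -
    have AB: "A \<subseteq> {v. is_sink G arr v}" "B \<subseteq> {v. is_source G arr v}" "A \<inter> B = {}" "A \<union> B \<noteq> {}"
      using that by auto
    then have "A \<union> B \<subseteq> verts G" by (auto simp: is_sink_def is_source_def)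
    note card_H = card_verts_delete_verts[OF fin this AB(3)]
    have "verts (delete_verts G (A \<union> B)) \<subset> verts G"
      using \<open>A \<union> B \<subseteq> verts G\<close> AB(4) by auto
    then have "card (verts (delete_verts G (A \<union> B))) < card (verts G)"
      by (rule psubset_card_mono[OF fin])
    then show ?thesis
      unfolding alternating_sum_layer_fibre_delete[OF sg ori AB]
      using less.hyps[OF _ signed_poset_delete_verts[OF less.prems]] card_H
      by (simp add: n_def neg_one_power_add_eq_neg_one_power_diff[symmetric] power_add)
  qed
  have "sum ?f ?C = (if edges G = {} then 1 else 0) +
      (\<Sum>\<kappa> | \<kappa> \<in> ?C \<and> 1 \<le> colour_level G \<kappa>. ?f \<kappa>)"
    unfolding sum_gapless_colourings_split_level[OF sg] by (simp add: colour_level_zero_colouring[OF sg])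
  also have "(\<Sum>\<kappa> | \<kappa> \<in> ?C \<and> 1 \<le> colour_level G \<kappa>. ?f \<kappa>) =
      (\<Sum>(A, B)\<in>?layers. - ((-1) ^ n * (-1) ^ (card A + card B)))"
    unfolding sum_gapless_colourings_by_layers[OF sg] using fibre by (intro sum.cong) auto
  also have "\<dots> = - ((-1) ^ n * (\<Sum>(A, B)\<in>?layers. (-1) ^ (card A + card B)))"
    by (simp add: sum_negf sum_distrib_left case_prod_unfold)
  finally show ?case
    unfolding sum_neg_one_power_layers[OF less.prems]
    by (cases "edges G = {}") (simp_all add: n_def right_diff_distrib)
qed

section \<open>The sink functional\<close>

definition colour_mset :: "sgraph \<Rightarrow> (nat \<Rightarrow> int) \<Rightarrow> int multiset" where
  "colour_mset G \<kappa> = image_mset \<kappa> (mset_set (verts G))"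

lemma set_mset_colour_mset: "finite (verts G) \<Longrightarrow> set_mset (colour_mset G \<kappa>) = \<kappa> ` verts G"
  by (simp add: colour_mset_def)

lemma count_colour_mset:
  assumes "finite (verts G)"
  shows "count (colour_mset G \<kappa>) y = card {v \<in> verts G. \<kappa> v = y}"
proof -
  have "count (colour_mset G \<kappa>) y = (\<Sum>v\<in>\<kappa> -` {y} \<inter> verts G. 1)"
    unfolding colour_mset_def count_image_mset using assms by (intro sum.cong) auto
  also have "\<kappa> -` {y} \<inter> verts G = {v \<in> verts G. \<kappa> v = y}" by auto
  finally show ?thesis by simp
qed

lemma Ycoef_gapless:
  assumes "signed_graph G" "gapless (set_mset m)"
  shows "Ycoef G arr m = of_nat (card {\<kappa> \<in> gapless_colourings G arr. colour_mset G \<kappa> = m})"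
proof -
  have "finite (verts G)" using assms(1) by (simp add: signed_graph_def)
  then have "{\<kappa> \<in> verts G \<rightarrow>\<^sub>E UNIV. proper G \<kappa> \<and> preserves G arr \<kappa> \<and>
       image_mset \<kappa> (mset_set (verts G)) = m} = {\<kappa> \<in> gapless_colourings G arr. colour_mset G \<kappa> = m}"
    using assms(2) set_mset_colour_mset[of G]
    by (auto simp: gapless_colourings_def colour_mset_def)
  then show ?thesis unfolding Ycoef_def by simp
qed

lemma gapless_support_Ycoef:
  assumes "signed_graph G"
  shows "{m. gapless (set_mset m) \<and> Ycoef G arr m \<noteq> 0} \<subseteq> colour_mset G ` gapless_colourings G arr"
proof
  fix m assume "m \<in> {m. gapless (set_mset m) \<and> Ycoef G arr m \<noteq> 0}"
  then have "{\<kappa> \<in> gapless_colourings G arr. colour_mset G \<kappa> = m} \<noteq> {}"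
    using Ycoef_gapless[OF assms] by fastforce
  then show "m \<in> colour_mset G ` gapless_colourings G arr" by blast
qed

text \<open>Over the gapless colourings of a signed poset the sign \<open>(-1)^(|V| + L)\<close> adds up to 1,
  and the correction term makes the colourings with top layer \<open>A\<close> and no colour \<open>-L\<close> contribute
  \<open>(t - 1)^|A|\<close> in total; together they give \<open>\<Sum>A \<subseteq> sinks. (t - 1)^|A| = t^sinks\<close>.\<close>
definition sink_weight :: "int multiset \<Rightarrow> rat poly" where
  "sink_weight m = (-1) ^ (size m + nat (level (set_mset m))) *
     (1 - (if 1 \<le> level (set_mset m) \<and> - level (set_mset m) \<notin># m
           then (1 - [:0, 1:]) ^ count m (level (set_mset m)) else 0))"

text \<open>Only gapless monomials are summed; for \<open>f \<in> Yspan\<close> these form a finite set, elsewhere the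
  sum may be infinite and then takes the junk value 0.\<close>
definition sink_functional :: "(int multiset \<Rightarrow> rat) \<Rightarrow> rat poly" where
  "sink_functional f = (\<Sum>m | gapless (set_mset m) \<and> f m \<noteq> 0. smult (f m) (sink_weight m))"

lemma sink_functional_eq_sum:
  assumes "finite D" "{m. gapless (set_mset m) \<and> f m \<noteq> 0} \<subseteq> D" "\<forall>m\<in>D. gapless (set_mset m)"
  shows "sink_functional f = (\<Sum>m\<in>D. smult (f m) (sink_weight m))"
  unfolding sink_functional_def using assms by (intro sum.mono_neutral_left) auto

lemma sink_functional_Ycoef_eq_sum:
  assumes sg: "signed_graph G"
  shows "sink_functional (Ycoef G arr) = (\<Sum>\<kappa>\<in>gapless_colourings G arr. sink_weight (colour_mset G \<kappa>))"
proof -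
  have fin: "finite (verts G)" using sg by (simp add: signed_graph_def)
  let ?C = "gapless_colourings G arr"
  let ?M = "colour_mset G ` ?C"
  have fin_C: "finite ?C" by (rule finite_gapless_colourings[OF fin])
  have gapless_M: "gapless (set_mset m)" if "m \<in> ?M" for m
    using that set_mset_colour_mset[OF fin] by (auto simp: gapless_colourings_def)
  have "sink_functional (Ycoef G arr) = (\<Sum>m\<in>?M. smult (Ycoef G arr m) (sink_weight m))"
    using fin_C gapless_support_Ycoef[OF sg] gapless_M by (intro sink_functional_eq_sum) auto
  also have "\<dots> = (\<Sum>m\<in>?M. \<Sum>\<kappa> | \<kappa> \<in> ?C \<and> colour_mset G \<kappa> = m. sink_weight (colour_mset G \<kappa>))"
    using Ycoef_gapless[OF sg gapless_M] by (intro sum.cong) (auto simp: of_nat_mult_conv_smult)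
  also have "\<dots> = (\<Sum>\<kappa>\<in>?C. sink_weight (colour_mset G \<kappa>))"
    using fin_C by (intro sum.group) auto
  finally show ?thesis .
qed

lemma sink_weight_colour_mset:
  assumes sg: "signed_graph G"
  shows "sink_weight (colour_mset G \<kappa>) = (-1) ^ (card (verts G) + nat (colour_level G \<kappa>)) *
    (1 - (if 1 \<le> colour_level G \<kappa> \<and> bottom_verts G \<kappa> = {}
          then (1 - [:0, 1:]) ^ card (top_verts G \<kappa>) else 0))"
proof -
  have fin: "finite (verts G)" using sg by (simp add: signed_graph_def)
  have "size (colour_mset G \<kappa>) = card (verts G)" by (simp add: colour_mset_def)
  moreover have "level (set_mset (colour_mset G \<kappa>)) = colour_level G \<kappa>"
    by (simp add: set_mset_colour_mset[OF fin] colour_level_def)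
  moreover have "count (colour_mset G \<kappa>) (colour_level G \<kappa>) = card (top_verts G \<kappa>)"
    by (simp add: count_colour_mset[OF fin] top_verts_def)
  moreover have "- colour_level G \<kappa> \<notin># colour_mset G \<kappa> \<longleftrightarrow> bottom_verts G \<kappa> = {}"
    unfolding set_mset_colour_mset[OF fin] bottom_verts_def by (auto simp: image_iff eq_commute)
  ultimately show ?thesis by (simp only: sink_weight_def)
qed

lemma alternating_sum_layer_fibre:
  assumes sp: "signed_poset G arr"
    and AB: "A \<subseteq> {v. is_sink G arr v}" "B \<subseteq> {v. is_source G arr v}" "A \<inter> B = {}" "A \<union> B \<noteq> {}"
  shows "(\<Sum>\<kappa>\<in>layer_fibre G arr A B. (-1::'a::comm_ring_1) ^ nat (colour_level G \<kappa>)) =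
    - ((-1) ^ card (verts G) * (-1) ^ (card A + card B))"
proof -
  have sg: "signed_graph G" and ori: "orientation G arr"
    using sp by (auto simp: signed_poset_def acyclic_orientation_def)
  have fin: "finite (verts G)" using sg by (simp add: signed_graph_def)
  have "A \<union> B \<subseteq> verts G" using AB by (auto simp: is_sink_def is_source_def)
  note card_H = card_verts_delete_verts[OF fin this AB(3)]
  show ?thesis
    unfolding alternating_sum_layer_fibre_delete[OF sg ori AB]
      alternating_level_sum[OF signed_poset_delete_verts[OF sp]] card_H(1)
    using card_H(2) by (simp add: neg_one_power_add_eq_neg_one_power_diff[symmetric] power_add)
qed

lemma sum_gapless_colourings_without_bottom:
  fixes x :: "'a::comm_ring_1"
  assumes sp: "signed_poset G arr"
  shows "(\<Sum>\<kappa> | \<kappa> \<in> gapless_colourings G arr \<and> 1 \<le> colour_level G \<kappa> \<and> bottom_verts G \<kappa> = {}.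
            (-1) ^ (card (verts G) + nat (colour_level G \<kappa>)) * x ^ card (top_verts G \<kappa>)) =
         - (\<Sum>A\<in>Pow {v. is_sink G arr v} - {{}}. (- x) ^ card A)"
proof -
  have sg: "signed_graph G" using sp by (simp add: signed_poset_def)
  have fin: "finite (verts G)" using sg by (simp add: signed_graph_def)
  define n where "n = card (verts G)"
  let ?S = "{\<kappa>. \<kappa> \<in> gapless_colourings G arr \<and> 1 \<le> colour_level G \<kappa> \<and> bottom_verts G \<kappa> = {}}"
  let ?T = "Pow {v. is_sink G arr v} - {{}}"
  let ?h = "\<lambda>\<kappa>. (-1::'a) ^ (n + nat (colour_level G \<kappa>)) * x ^ card (top_verts G \<kappa>)"
  have fin_T: "finite ?T"
    using fin by (auto intro: finite_subset[of _ "verts G"] simp: is_sink_def)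
  have "top_verts G ` ?S \<subseteq> ?T"
    using top_verts_sinks[OF sg] top_bottom_verts_nonempty[OF sg] by blast
  then have "sum ?h ?S = (\<Sum>A\<in>?T. \<Sum>\<kappa> | \<kappa> \<in> ?S \<and> top_verts G \<kappa> = A. ?h \<kappa>)"
    using finite_gapless_colourings[OF fin] fin_T by (intro sum.group[symmetric]) auto
  also have "\<dots> = (\<Sum>A\<in>?T. - ((- x) ^ card A))"
  proof (rule sum.cong[OF refl])
    fix A assume "A \<in> ?T"
    then have A: "A \<subseteq> {v. is_sink G arr v}" "{} \<subseteq> {v. is_source G arr v}" "A \<inter> {} = {}"
      "A \<union> {} \<noteq> {}" by auto
    have "{\<kappa>. \<kappa> \<in> ?S \<and> top_verts G \<kappa> = A} = layer_fibre G arr A {}"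
      by (auto simp: layer_fibre_def)
    then have "(\<Sum>\<kappa> | \<kappa> \<in> ?S \<and> top_verts G \<kappa> = A. ?h \<kappa>) =
        (-1) ^ n * x ^ card A * (\<Sum>\<kappa>\<in>layer_fibre G arr A {}. (-1) ^ nat (colour_level G \<kappa>))"
      by (simp add: sum_distrib_left power_add layer_fibre_def mult_ac)
    also have "\<dots> = - ((-1) ^ n * (-1) ^ n * ((-1) ^ card A * x ^ card A))"
      unfolding alternating_sum_layer_fibre[OF sp A] n_def by (simp only: mult_ac mult_minus_right card.empty add_0_right)
    also have "\<dots> = - ((- x) ^ card A)"
      by (simp only: minus_one_mult_self mult_1_left power_minus[of x])
    finally show "(\<Sum>\<kappa> | \<kappa> \<in> ?S \<and> top_verts G \<kappa> = A. ?h \<kappa>) = - ((- x) ^ card A)" .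
  qed
  finally show ?thesis by (simp add: n_def sum_negf)
qed

lemma sink_functional_Ycoef:
  assumes sp: "signed_poset G arr"
  shows "sink_functional (Ycoef G arr) = [:0, 1:] ^ sinks G arr"
proof -
  have sg: "signed_graph G" using sp by (simp add: signed_poset_def)
  have fin: "finite (verts G)" using sg by (simp add: signed_graph_def)
  define n where "n = card (verts G)"
  define sink_set where "sink_set = {v. is_sink G arr v}"
  have fin_sinks: "finite sink_set"
    using fin by (auto intro: finite_subset[of _ "verts G"] simp: sink_set_def is_sink_def)
  let ?C = "gapless_colourings G arr"
  let ?P = "\<lambda>\<kappa>. 1 \<le> colour_level G \<kappa> \<and> bottom_verts G \<kappa> = {}"
  let ?sign = "\<lambda>\<kappa>. (-1::rat poly) ^ (n + nat (colour_level G \<kappa>))"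
  let ?t = "[:0, 1:] :: rat poly"
  have "sink_functional (Ycoef G arr) =
      (\<Sum>\<kappa>\<in>?C. ?sign \<kappa> - (if ?P \<kappa> then ?sign \<kappa> * (1 - ?t) ^ card (top_verts G \<kappa>) else 0))"
    unfolding sink_functional_Ycoef_eq_sum[OF sg] sink_weight_colour_mset[OF sg] n_def
    by (intro sum.cong) (auto simp: right_diff_distrib)
  also have "\<dots> = (\<Sum>\<kappa>\<in>?C. ?sign \<kappa>) -
      (\<Sum>\<kappa> | \<kappa> \<in> ?C \<and> ?P \<kappa>. ?sign \<kappa> * (1 - ?t) ^ card (top_verts G \<kappa>))"
    using finite_gapless_colourings[OF fin] by (simp add: sum_subtractf sum.inter_filter)
  also have "\<dots> = 1 + (\<Sum>A\<in>Pow sink_set - {{}}. (?t - 1) ^ card A)"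
  proof -
    have "(\<Sum>\<kappa>\<in>?C. ?sign \<kappa>) = (-1) ^ n * (\<Sum>\<kappa>\<in>?C. (-1) ^ nat (colour_level G \<kappa>))"
      by (simp add: power_add sum_distrib_left)
    also have "\<dots> = 1"
      using alternating_level_sum[OF sp, where 'a="rat poly"] by (simp add: n_def)
    finally have "(\<Sum>\<kappa>\<in>?C. ?sign \<kappa>) = 1" .
    moreover have "(\<Sum>\<kappa> | \<kappa> \<in> ?C \<and> ?P \<kappa>. ?sign \<kappa> * (1 - ?t) ^ card (top_verts G \<kappa>)) =
        - (\<Sum>A\<in>Pow sink_set - {{}}. (?t - 1) ^ card A)"
      using sum_gapless_colourings_without_bottom[OF sp, of "1 - ?t"] by (simp add: n_def sink_set_def)
    ultimately show ?thesis by simp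
  qed
  also have "\<dots> = (\<Sum>A\<in>Pow sink_set. (?t - 1) ^ card A)"
    using fin_sinks by (simp add: sum.remove[of "Pow sink_set" "{}"])
  also have "\<dots> = ?t ^ sinks G arr"
    using sum_power_card_Pow[OF fin_sinks, of "?t - 1"] by (simp add: sinks_def sink_set_def)
  finally show ?thesis .
qed

lemma finite_gapless_support_Yspan:
  assumes "f \<in> Yspan"
  shows "finite {m. gapless (set_mset m) \<and> f m \<noteq> 0}"
proof -
  obtain S c where f: "f = (\<lambda>m. \<Sum>p\<in>S. c p * Ycoef (fst p) (snd p) m)" and "finite S"
    and posets: "\<forall>p\<in>S. signed_poset (fst p) (snd p)"
    using assms unfolding Yspan_def by blast
  have "{m. gapless (set_mset m) \<and> f m \<noteq> 0} \<subseteq>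
      (\<Union>p\<in>S. colour_mset (fst p) ` gapless_colourings (fst p) (snd p))"
  proof
    fix m assume m: "m \<in> {m. gapless (set_mset m) \<and> f m \<noteq> 0}"
    then obtain p where "p \<in> S" "Ycoef (fst p) (snd p) m \<noteq> 0"
      unfolding f by (auto intro: sum.not_neutral_contains_not_neutral)
    then show "m \<in> (\<Union>p\<in>S. colour_mset (fst p) ` gapless_colourings (fst p) (snd p))"
      using m gapless_support_Ycoef posets by (fastforce simp: signed_poset_def)
  qed
  moreover have "finite (\<Union>p\<in>S. colour_mset (fst p) ` gapless_colourings (fst p) (snd p))"
    using \<open>finite S\<close> posets
    by (auto intro!: finite_gapless_colourings simp: signed_poset_def signed_graph_def)
  ultimately show ?thesis by (rule finite_subset)
qed

lemma sink_functional_add: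
  assumes f: "f \<in> Yspan" and g: "g \<in> Yspan"
  shows "sink_functional (\<lambda>m. f m + g m) = sink_functional f + sink_functional g"
proof -
  let ?D = "{m. gapless (set_mset m) \<and> f m \<noteq> 0} \<union> {m. gapless (set_mset m) \<and> g m \<noteq> 0}"
  have D: "finite ?D" "\<forall>m\<in>?D. gapless (set_mset m)"
    using finite_gapless_support_Yspan[OF f] finite_gapless_support_Yspan[OF g] by auto
  have "sink_functional (\<lambda>m. f m + g m) = (\<Sum>m\<in>?D. smult (f m + g m) (sink_weight m))"
    by (rule sink_functional_eq_sum[OF D(1) _ D(2)]) auto
  also have "\<dots> = (\<Sum>m\<in>?D. smult (f m) (sink_weight m)) + (\<Sum>m\<in>?D. smult (g m) (sink_weight m))"
    by (simp add: smult_add_left sum.distrib)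
  also have "\<dots> = sink_functional f + sink_functional g"
  proof -
    have "sink_functional f = (\<Sum>m\<in>?D. smult (f m) (sink_weight m))"
      by (rule sink_functional_eq_sum[OF D(1) _ D(2)]) auto
    moreover have "sink_functional g = (\<Sum>m\<in>?D. smult (g m) (sink_weight m))"
      by (rule sink_functional_eq_sum[OF D(1) _ D(2)]) auto
    ultimately show ?thesis by simp
  qed
  finally show ?thesis .
qed

lemma sink_functional_smult:
  assumes f: "f \<in> Yspan"
  shows "sink_functional (\<lambda>m. c * f m) = smult c (sink_functional f)"
proof -
  let ?D = "{m. gapless (set_mset m) \<and> f m \<noteq> 0}"
  have D: "finite ?D" "\<forall>m\<in>?D. gapless (set_mset m)"
    using finite_gapless_support_Yspan[OF f] by auto
  have "sink_functional (\<lambda>m. c * f m) = (\<Sum>m\<in>?D. smult (c * f m) (sink_weight m))"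
    by (rule sink_functional_eq_sum[OF D(1) _ D(2)]) auto
  also have "\<dots> = [:c:] * (\<Sum>m\<in>?D. smult (f m) (sink_weight m))"
    by (simp add: sum_distrib_left mult.commute)
  also have "\<dots> = smult c (sink_functional f)"
    by (simp add: sink_functional_def)
  finally show ?thesis .
qed

theorem mainTheorem7:
  shows "\<exists>\<phi> :: (int multiset \<Rightarrow> rat) \<Rightarrow> rat poly.
     (\<forall>f\<in>Yspan. \<forall>g\<in>Yspan. \<phi> (\<lambda>m. f m + g m) = \<phi> f + \<phi> g) \<and>
     (\<forall>c. \<forall>f\<in>Yspan. \<phi> (\<lambda>m. c * f m) = smult c (\<phi> f)) \<and>
     (\<forall>G arr. signed_poset G arr \<longrightarrow> \<phi> (Ycoef G arr) = [:0, 1:] ^ sinks G arr)"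
  by (intro exI[of _ sink_functional] conjI ballI allI impI)
    (simp_all add: sink_functional_add sink_functional_smult sink_functional_Ycoef)

end
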